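(* For $\mathbf{x}\in\mathcal{B}^\Sigma_{e,n}$, $\mathbf{y}\in\mathcal{B}^\Sigma_{d,m}$ and $\mathbf{v}\in\mathcal{B}^\Sigma_{d,n}$, we have $\Delta(\mathbf{y}\cdot\mathbf{v})=\Delta(\mathbf{y})\cdot\Delta(\mathbf{v})$ and $\Delta(\mathbf{x}*\mathbf{v})=\Delta(\mathbf{x})*\Delta(\mathbf{v})$.
   Context: Let $\mathbf{k}$ be a field of characteristic $0$ and $B=\bigoplus_{d\ge0}B_d$ a commutative graded $\mathbf{k}$-algebra with $B_0=\mathbf{k}$, generated by $B_1$, $\dim B_1<\infty$. Let $\mathcal{B}^\Sigma=\bigoplus_{n,d}\mathcal{B}^\Sigma_{d,n}$ with $\mathcal{B}^\Sigma_{d,n}=(B_d^{\otimes n})^{\Sigma_n}$ ($\Sigma_n$ permuting factors). Product $\cdot$: for $f\in\mathcal{B}^\Sigma_{d,n}$, $g\in\mathcal{B}^\Sigma_{d,m}$, $f\cdot g=\sum_\sigma f\cdot_\sigma g$ where $\sigma$ runs over subsets $\{i_1<\cdots<i_n\}\subseteq[n+m]$ and $f\cdot_\sigma g$ places the factors of $f$ in positions $i_1,\dots,i_n$ and those of $g$ in the complementary positions in order (zero between different $d$). Product $*:\mathcal{B}^\Sigma_{d,n}\otimes\mathcal{B}^\Sigma_{e,n}\to\mathcal{B}^\Sigma_{d+e,n}$ is factorwise multiplication $(u_1\otimes\cdots\otimes u_n)*(v_1\otimes\cdots\otimes v_n)=u_1v_1\otimes\cdots\otimes u_nv_n$ (zero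 for different $n$). For fixed $d$, $\bigoplus_n\mathcal{B}^\Sigma_{d,n}$ is a free divided power algebra under $\cdot$ generated by $\mathcal{B}^\Sigma_{d,1}=B_d$; $\Delta:\mathcal{B}^\Sigma\to\mathcal{B}^\Sigma\otimes\mathcal{B}^\Sigma$ is the unique $\cdot$-algebra homomorphism with $\Delta(w)=1\otimes w+w\otimes1$ for $w\in\mathcal{B}^\Sigma_{d,1}$ (all $d$). The products $\cdot$ and $*$ are extended to $\mathcal{B}^\Sigma\otimes\mathcal{B}^\Sigma$ componentwise: $(a\otimes b)\cdot(c\otimes e)=(a\cdot c)\otimes(b\cdot e)$ and $(a\otimes b)*(c\otimes e)=(a*c)\otimes(b*e)$. *)

theory Defs
  imports "HOL-Combinatorics.Permutations"
begin

text \<open>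
The graded algebra B is described by a basis of each graded piece:
B_d has basis b^d_0, ..., b^d_{dim d - 1}, and the multiplication B_d x B_e -> B_{d+e}
is given by structure constants:  b^d_i b^e_j = sum_l  c d e i j l  b^{d+e}_l.
An element of the tensor power B_d^{(tensor n)} is given by its coefficient function on
basis tuples, i.e. on lists t of length n with entries < dim d.
An element F of the big algebra B^Sigma = (+)_{d,n} (B_d^{tensor n})^{Sigma_n} is a
function  F d t  (coefficient of the basis tensor t in degree d; n = length t),
finitely supported, and symmetric under permutations of the tensor factors.
An element of B^Sigma (tensor) B^Sigma is a function  G d d' s t  (coefficient of
(basis tensor s in degree d) (tensor) (basis tensor t in degree d')).
\<close>

type_synonym 'k elt = "nat \<Rightarrow> nat list \<Rightarrow> 'k"
type_synonym 'k elt2 = "nat \<Rightarrow> nat \<Rightarrow> nat list \<Rightarrow> nat list \<Rightarrow> 'k"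

definition tuples :: "(nat \<Rightarrow> nat) \<Rightarrow> nat \<Rightarrow> nat \<Rightarrow> nat list set" where
  "tuples dim d n = {s. length s = n \<and> set s \<subseteq> {..<dim d}}"

text \<open>Coordinates (in B_{length is}) of the product of degree-one basis elements b^1_i.\<close>
primrec mprod :: "(nat \<Rightarrow> nat) \<Rightarrow> (nat \<Rightarrow> nat \<Rightarrow> nat \<Rightarrow> nat \<Rightarrow> nat \<Rightarrow> 'k::field)
    \<Rightarrow> nat list \<Rightarrow> nat \<Rightarrow> 'k" where
  "mprod dim c [] = (\<lambda>l. if l = 0 then 1 else 0)"
| "mprod dim c (i # is) =
     (\<lambda>l. \<Sum>j<dim (length is). mprod dim c is j * c 1 (length is) i j l)"

text \<open>B is a commutative graded k-algebra with B_0 = k, generated by B_1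
 (dim B_1 finite is automatic in this model).\<close>
definition graded_alg :: "(nat \<Rightarrow> nat) \<Rightarrow> (nat \<Rightarrow> nat \<Rightarrow> nat \<Rightarrow> nat \<Rightarrow> nat \<Rightarrow> 'k::field) \<Rightarrow> bool" where
  "graded_alg dim c \<longleftrightarrow>
     dim 0 = 1
   \<and> (\<forall>e j l. j < dim e \<longrightarrow> l < dim e \<longrightarrow> c 0 e 0 j l = (if j = l then 1 else 0))
   \<and> (\<forall>d e i j l. i < dim d \<longrightarrow> j < dim e \<longrightarrow> l < dim (d + e) \<longrightarrow> c d e i j l = c e d j i l)
   \<and> (\<forall>d e f i j k m. i < dim d \<longrightarrow> j < dim e \<longrightarrow> k < dim f \<longrightarrow> m < dim (d + e + f) \<longrightarrow>
        (\<Sum>l<dim (d + e). c d e i j l * c (d + e) f l k m)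
      = (\<Sum>l<dim (e + f). c e f j k l * c d (e + f) i l m))
   \<and> (\<forall>d (w :: nat \<Rightarrow> 'k). \<exists>a :: nat list \<Rightarrow> 'k.
        \<forall>l<dim d. w l = (\<Sum>is\<in>tuples dim 1 d. a is * mprod dim c is l))"

definition perm_list :: "(nat \<Rightarrow> nat) \<Rightarrow> nat list \<Rightarrow> nat list" where
  "perm_list \<sigma> t = map (\<lambda>i. t ! \<sigma> i) [0..<length t]"

definition is_elt :: "(nat \<Rightarrow> nat) \<Rightarrow> 'k::field elt \<Rightarrow> bool" where
  "is_elt dim F \<longleftrightarrow>
     finite {(d, t). F d t \<noteq> 0}
   \<and> (\<forall>d t. F d t \<noteq> 0 \<longrightarrow> set t \<subseteq> {..<dim d})
   \<and> (\<forall>d t \<sigma>. \<sigma> permutes {..<length t} \<longrightarrow> F d (perm_list \<sigma> t) = F d t)"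

definition is_hom_elt :: "(nat \<Rightarrow> nat) \<Rightarrow> nat \<Rightarrow> nat \<Rightarrow> 'k::field elt \<Rightarrow> bool" where
  "is_hom_elt dim d n F \<longleftrightarrow> is_elt dim F \<and> (\<forall>d' t. F d' t \<noteq> 0 \<longrightarrow> d' = d \<and> length t = n)"

definition is_elt2 :: "(nat \<Rightarrow> nat) \<Rightarrow> 'k::field elt2 \<Rightarrow> bool" where
  "is_elt2 dim G \<longleftrightarrow>
     finite {(d, d', s, t). G d d' s t \<noteq> 0}
   \<and> (\<forall>d d' s t. G d d' s t \<noteq> 0 \<longrightarrow> set s \<subseteq> {..<dim d} \<and> set t \<subseteq> {..<dim d'})
   \<and> (\<forall>d d' s t \<sigma>. \<sigma> permutes {..<length s} \<longrightarrow> G d d' (perm_list \<sigma> s) t = G d d' s t)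
   \<and> (\<forall>d d' s t \<sigma>. \<sigma> permutes {..<length t} \<longrightarrow> G d d' s (perm_list \<sigma> t) = G d d' s t)"

definition dot :: "'k::field elt \<Rightarrow> 'k elt \<Rightarrow> 'k elt" where
  "dot F G = (\<lambda>d t. \<Sum>S\<in>Pow {..<length t}. F d (nths t S) * G d (nths t (- S)))"

definition dot2 :: "'k::field elt2 \<Rightarrow> 'k elt2 \<Rightarrow> 'k elt2" where
  "dot2 G H = (\<lambda>d d' s t. \<Sum>S\<in>Pow {..<length s}. \<Sum>T\<in>Pow {..<length t}.
      G d d' (nths s S) (nths t T) * H d d' (nths s (- S)) (nths t (- T)))"

definition coefprod :: "(nat \<Rightarrow> nat \<Rightarrow> nat \<Rightarrow> nat \<Rightarrow> nat \<Rightarrow> 'k::field)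
    \<Rightarrow> nat \<Rightarrow> nat \<Rightarrow> nat list \<Rightarrow> nat list \<Rightarrow> nat list \<Rightarrow> 'k" where
  "coefprod c d e s s' t = (\<Prod>j<length t. c d e (s ! j) (s' ! j) (t ! j))"

definition star :: "(nat \<Rightarrow> nat) \<Rightarrow> (nat \<Rightarrow> nat \<Rightarrow> nat \<Rightarrow> nat \<Rightarrow> nat \<Rightarrow> 'k::field)
    \<Rightarrow> 'k elt \<Rightarrow> 'k elt \<Rightarrow> 'k elt" where
  "star dim c F G = (\<lambda>D t. if set t \<subseteq> {..<dim D} then
      (\<Sum>d\<le>D. \<Sum>s\<in>tuples dim d (length t). \<Sum>s'\<in>tuples dim (D - d) (length t).
         F d s * G (D - d) s' * coefprod c d (D - d) s s' t)
    else 0)"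

definition star2 :: "(nat \<Rightarrow> nat) \<Rightarrow> (nat \<Rightarrow> nat \<Rightarrow> nat \<Rightarrow> nat \<Rightarrow> nat \<Rightarrow> 'k::field)
    \<Rightarrow> 'k elt2 \<Rightarrow> 'k elt2 \<Rightarrow> 'k elt2" where
  "star2 dim c G H = (\<lambda>D D' s t. if set s \<subseteq> {..<dim D} \<and> set t \<subseteq> {..<dim D'} then
      (\<Sum>d\<le>D. \<Sum>d'\<le>D'.
         \<Sum>s1\<in>tuples dim d (length s). \<Sum>s2\<in>tuples dim (D - d) (length s).
         \<Sum>t1\<in>tuples dim d' (length t). \<Sum>t2\<in>tuples dim (D' - d') (length t).
           G d d' s1 t1 * H (D - d) (D' - d') s2 t2
           * coefprod c d (D - d) s1 s2 s * coefprod c d' (D' - d') t1 t2 t)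
    else 0)"

definition unit_elt :: "nat \<Rightarrow> 'k::field elt" where
  "unit_elt d = (\<lambda>d' t. if d' = d \<and> t = [] then 1 else 0)"

definition unit2 :: "nat \<Rightarrow> 'k::field elt2" where
  "unit2 d = (\<lambda>d1 d2 s t. if d1 = d \<and> d2 = d \<and> s = [] \<and> t = [] then 1 else 0)"

definition prim :: "nat \<Rightarrow> 'k::field elt \<Rightarrow> 'k elt2" where
  "prim d W = (\<lambda>d1 d2 s t. if d1 = d \<and> d2 = d then
       (if s = [] then W d t else 0) + (if t = [] then W d s else 0) else 0)"

definition is_Delta :: "(nat \<Rightarrow> nat) \<Rightarrow> ('k::field elt \<Rightarrow> 'k elt2) \<Rightarrow> bool" where
  "is_Delta dim \<Delta> \<longleftrightarrow>
     (\<forall>F. is_elt dim F \<longrightarrow> is_elt2 dim (\<Delta> F))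
   \<and> (\<forall>F G. is_elt dim F \<longrightarrow> is_elt dim G \<longrightarrow>
        \<Delta> (\<lambda>d t. F d t + G d t) = (\<lambda>d d' s t. \<Delta> F d d' s t + \<Delta> G d d' s t))
   \<and> (\<forall>a F. is_elt dim F \<longrightarrow> \<Delta> (\<lambda>d t. a * F d t) = (\<lambda>d d' s t. a * \<Delta> F d d' s t))
   \<and> (\<forall>F G. is_elt dim F \<longrightarrow> is_elt dim G \<longrightarrow> \<Delta> (dot F G) = dot2 (\<Delta> F) (\<Delta> G))
   \<and> (\<forall>d. \<Delta> (unit_elt d) = unit2 d)
   \<and> (\<forall>d W. is_hom_elt dim d 1 W \<longrightarrow> \<Delta> W = prim d W)"

end

theory Submission
  imports Defs
begin

text \<open>
  The coproduct \<open>\<Delta>\<close> is forced to be deconcatenation, which sends \<open>F\<close> to the tensor whose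
  \<open>s \<otimes> t\<close>-coefficient is the \<open>s @ t\<close>-coefficient of \<open>F\<close>. Deconcatenation is multiplicative
  for the shuffle product, maps units to units and each \<open>w\<close> of tensor length one to
  \<open>1 \<otimes> w + w \<otimes> 1\<close>. Conversely, in characteristic 0 every \<open>F\<close> of tensor length \<open>n + 1\<close>
  equals \<open>1/(n+1) \<Sum>\<^sub>j b\<^sub>j \<cdot> \<partial>\<^sub>j F\<close>, where \<open>\<partial>\<^sub>j F\<close> strips one tensor factor \<open>b\<^sub>j\<close> off \<open>F\<close>;
  so by induction on \<open>n\<close>, \<open>\<Delta>\<close> is deconcatenation on homogeneous elements. The factorwise
  product is computed position by position and therefore commutes with deconcatenation,
  while the shuffle-product identity is one of the defining properties of \<open>\<Delta>\<close>.
\<close>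

lemma perm_list_eq_permute_list: "perm_list = permute_list"
  by (auto simp: perm_list_def permute_list_def fun_eq_iff)

lemma perm_invariant_iff_mset_invariant:
  "(\<forall>t \<sigma>. \<sigma> permutes {..<length t} \<longrightarrow> f (perm_list \<sigma> t) = f t) \<longleftrightarrow>
   (\<forall>t t'. mset t = mset t' \<longrightarrow> f t = f t')"
  by (metis mset_eq_permutation mset_permute_list perm_list_eq_permute_list)

lemma is_elt_iff_mset_invariant:
  "is_elt dim F \<longleftrightarrow> finite {(d, t). F d t \<noteq> 0}
   \<and> (\<forall>d t. F d t \<noteq> 0 \<longrightarrow> set t \<subseteq> {..<dim d})
   \<and> (\<forall>d t t'. mset t = mset t' \<longrightarrow> F d t = F d t')"
  unfolding is_elt_def perm_invariant_iff_mset_invariant ..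

lemma is_eltI:
  assumes "finite {(d, t). F d t \<noteq> 0}"
    and "\<And>d t. F d t \<noteq> 0 \<Longrightarrow> set t \<subseteq> {..<dim d}"
    and "\<And>d t t'. mset t = mset t' \<Longrightarrow> F d t = F d t'"
  shows "is_elt dim F"
  using assms unfolding is_elt_iff_mset_invariant by blast

lemma
  assumes "is_elt dim F"
  shows is_elt_finite_support: "finite {(d, t). F d t \<noteq> 0}"
    and is_elt_support_bounded: "F d t \<noteq> 0 \<Longrightarrow> set t \<subseteq> {..<dim d}"
    and is_elt_mset_invariant: "mset t = mset t' \<Longrightarrow> F d t = F d t'"
  using assms unfolding is_elt_iff_mset_invariant by blast+

lemma is_elt_add:
  assumes F: "is_elt dim F" and G: "is_elt dim G"
  shows "is_elt dim (\<lambda>d t. F d t + G d t)"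
proof (rule is_eltI)
  have "{(d, t). F d t + G d t \<noteq> 0} \<subseteq> {(d, t). F d t \<noteq> 0} \<union> {(d, t). G d t \<noteq> 0}"
    by auto
  then show "finite {(d, t). F d t + G d t \<noteq> 0}"
    using F G by (blast intro: finite_subset is_elt_finite_support)
  show "set t \<subseteq> {..<dim d}" if "F d t + G d t \<noteq> 0" for d t
    using that is_elt_support_bounded[OF F] is_elt_support_bounded[OF G] by (metis add_0)
  show "F d t + G d t = F d t' + G d t'" if "mset t = mset t'" for d t t'
    using that is_elt_mset_invariant[OF F] is_elt_mset_invariant[OF G] by metis
qed

lemma is_elt_sum:
  "finite J \<Longrightarrow> (\<And>j. j \<in> J \<Longrightarrow> is_elt dim (G j)) \<Longrightarrow> is_elt dim (\<lambda>d t. \<Sum>j\<in>J. G j d t)"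
proof (induction J rule: finite_induct)
  case empty
  show ?case by (simp add: is_elt_iff_mset_invariant)
next
  case (insert a J)
  then show ?case using is_elt_add[of dim "G a" "\<lambda>d t. \<Sum>j\<in>J. G j d t"] by simp
qed

lemma is_elt_unit_elt: "is_elt dim (unit_elt d)"
  by (rule is_eltI) (auto simp: unit_elt_def split: if_splits intro: finite_subset[of _ "{(d, [])}"])

lemma
  assumes "is_Delta dim \<Delta>"
  shows Delta_add: "is_elt dim F \<Longrightarrow> is_elt dim G \<Longrightarrow>
      \<Delta> (\<lambda>d t. F d t + G d t) = (\<lambda>d d' s t. \<Delta> F d d' s t + \<Delta> G d d' s t)"
    and Delta_scale: "is_elt dim F \<Longrightarrow> \<Delta> (\<lambda>d t. a * F d t) = (\<lambda>d d' s t. a * \<Delta> F d d' s t)"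
    and Delta_dot: "is_elt dim F \<Longrightarrow> is_elt dim G \<Longrightarrow> \<Delta> (dot F G) = dot2 (\<Delta> F) (\<Delta> G)"
    and Delta_unit_elt: "\<Delta> (unit_elt d) = unit2 d"
    and Delta_prim: "is_hom_elt dim d 1 W \<Longrightarrow> \<Delta> W = prim d W"
  using assms unfolding is_Delta_def by blast+

lemma Delta_zero:
  assumes "is_Delta dim \<Delta>"
  shows "\<Delta> (\<lambda>d t. 0) = (\<lambda>d d' s t. 0)"
  using Delta_scale[OF assms is_elt_unit_elt, of 0 0] by simp

lemma Delta_sum:
  assumes "is_Delta dim \<Delta>"
  shows "finite J \<Longrightarrow> (\<And>j. j \<in> J \<Longrightarrow> is_elt dim (G j)) \<Longrightarrow>
     \<Delta> (\<lambda>d t. \<Sum>j\<in>J. G j d t) = (\<lambda>d d' s t. \<Sum>j\<in>J. \<Delta> (G j) d d' s t)"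
proof (induction J rule: finite_induct)
  case empty
  then show ?case using Delta_zero[OF assms] by simp
next
  case (insert a J)
  have "is_elt dim (\<lambda>d t. \<Sum>j\<in>J. G j d t)"
    using insert by (intro is_elt_sum) auto
  with insert show ?case
    by (simp add: Delta_add[OF assms])
qed

lemma nths_cong_lessThan:
  "(\<And>i. i < length xs \<Longrightarrow> i \<in> A \<longleftrightarrow> i \<in> B) \<Longrightarrow> nths xs A = nths xs B"
  unfolding nths_def
  by (rule arg_cong[where f = "map fst"], rule filter_cong) (auto simp: set_zip)

lemma nths_append_shifted:
  assumes "S \<subseteq> {..<length s}"
  shows "nths (s @ t) (S \<union> (\<lambda>k. k + length s) ` T) = nths s S @ nths t T"
    and "nths (s @ t) (- S \<inter> - (\<lambda>k. k + length s) ` T) = nths s (- S) @ nths t (- T)"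
  unfolding nths_append
  by (intro arg_cong2[where f = "(@)"] nths_cong_lessThan; use assms in auto)+

lemma sum_Pow_lessThan_add:
  "(\<Sum>U\<in>Pow {..<a + b}. h U) = (\<Sum>S\<in>Pow {..<a}. \<Sum>T\<in>Pow {..<b::nat}. h (S \<union> (\<lambda>k. k + a) ` T))"
proof -
  have "(\<Sum>p\<in>Pow {..<a} \<times> Pow {..<b}. h (fst p \<union> (\<lambda>k. k + a) ` snd p)) = (\<Sum>U\<in>Pow {..<a + b}. h U)"
  proof (rule sum.reindex_bij_witness[where i = "\<lambda>U. (U \<inter> {..<a}, {k. k + a \<in> U})"
        and j = "\<lambda>p. fst p \<union> (\<lambda>k. k + a) ` snd p"])
    fix U assume "U \<in> Pow {..<a + b}"
    then show "(U \<inter> {..<a}, {k. k + a \<in> U}) \<in> Pow {..<a} \<times> Pow {..<b}" by auto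
    show "fst (U \<inter> {..<a}, {k. k + a \<in> U}) \<union> (\<lambda>k. k + a) ` snd (U \<inter> {..<a}, {k. k + a \<in> U}) = U"
      by (auto simp: image_iff) (metis add.commute le_add_diff_inverse not_less)
  qed auto
  then show ?thesis
    by (simp add: sum.cartesian_product case_prod_beta)
qed

definition deconcat :: "'k::field elt \<Rightarrow> 'k elt2" where
  "deconcat F = (\<lambda>d1 d2 s t. if d1 = d2 then F d1 (s @ t) else 0)"

lemma deconcat_dot: "deconcat (dot F G) = dot2 (deconcat F) (deconcat G)"
  by (intro ext) (simp add: deconcat_def dot_def dot2_def sum_Pow_lessThan_add nths_append_shifted)

lemma deconcat_prim:
  assumes "is_hom_elt dim d 1 W"
  shows "deconcat W = prim d W"
proof -
  have W0: "W d' u = 0" if "d' \<noteq> d \<or> length u \<noteq> 1" for d' u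
    using assms that unfolding is_hom_elt_def by blast
  have "W d (s @ t) = (if s = [] then W d t else 0) + (if t = [] then W d s else 0)" for s t
    using W0[of d "s @ t"] W0[of d "[]"] by (cases s; cases t) auto
  then show ?thesis
    using W0 by (auto simp: deconcat_def prim_def fun_eq_iff)
qed

definition basis_elt :: "nat \<Rightarrow> nat \<Rightarrow> 'k::field elt" where
  "basis_elt d j = (\<lambda>d' t. if d' = d \<and> t = [j] then 1 else 0)"

lemma is_hom_elt_basis_elt:
  assumes "j < dim d"
  shows "is_hom_elt dim d 1 (basis_elt d j)"
proof -
  have "is_elt dim (basis_elt d j)"
  proof (rule is_eltI)
    show "finite {(d', t). basis_elt d j d' t \<noteq> 0}"
      by (rule finite_subset[of _ "{(d, [j])}"]) (auto simp: basis_elt_def)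
    show "basis_elt d j d' t = basis_elt d j d' t'" if "mset t = mset t'" for d' t t'
      using that by (metis basis_elt_def mset_single_iff)
  qed (use assms in \<open>auto simp: basis_elt_def split: if_splits\<close>)
  then show ?thesis
    unfolding is_hom_elt_def by (auto simp: basis_elt_def split: if_splits)
qed

lemma nths_singleton_index: "k < length t \<Longrightarrow> nths t {k} = [t ! k]"
proof (induction t arbitrary: k)
  case (Cons x t)
  then show ?case by (cases k) (auto simp: nths_Cons)
qed simp

lemma nths_eq_singleton_iff:
  assumes "S \<subseteq> {..<length t}"
  shows "nths t S = [j] \<longleftrightarrow> (\<exists>k<length t. S = {k} \<and> t ! k = j)"
proof
  assume S: "nths t S = [j]"
  have "card S = 1"
  proof -
    have "{i. i < length t \<and> i \<in> S} = S"
      using assms by auto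
    then show ?thesis
      using S length_nths[of t S] by simp
  qed
  then obtain k where "S = {k}"
    by (auto simp: card_Suc_eq)
  with S assms show "\<exists>k<length t. S = {k} \<and> t ! k = j"
    by (auto simp: nths_singleton_index)
qed (auto simp: nths_singleton_index)

lemma mset_nths_compl: "mset (nths xs A) + mset (nths xs (- A)) = mset xs"
proof (induction xs arbitrary: A)
  case (Cons x xs)
  have "mset (nths xs {j. Suc j \<in> A}) + mset (nths xs {j. Suc j \<notin> A}) = mset xs"
    using Cons.IH[of "{j. Suc j \<in> A}"] by (simp add: Collect_neg_eq)
  then show ?case
    by (cases "0 \<in> A") (simp_all add: nths_Cons)
qed simp

lemma dot_basis_elt_cons:
  assumes "is_elt dim F"
  shows "dot (basis_elt d j) (\<lambda>d' u. F d' (j # u)) d' t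
       = (if d' = d then of_nat (count (mset t) j) * F d t else 0)"
proof (cases "d' = d")
  case True
  let ?P = "{S \<in> Pow {..<length t}. nths t S = [j]}"
  have summand: "(if nths t S = [j] then 1 else 0) * F d (j # nths t (- S))
      = (if nths t S = [j] then F d t else 0)" for S
  proof (cases "nths t S = [j]")
    case True
    then have "mset (j # nths t (- S)) = mset t"
      using mset_nths_compl[of t S] by simp
    with True show ?thesis
      using is_elt_mset_invariant[OF assms, of "j # nths t (- S)" t] by simp
  qed simp
  have "?P = (\<lambda>k. {k}) ` {k. k < length t \<and> t ! k = j}"
    using nths_eq_singleton_iff[of _ t j] by (auto simp: nths_singleton_index)
  then have "card ?P = count (mset t) j"
    by (simp add: card_image count_mset count_list_eq_length_filter length_filter_conv_card eq_commute)
  with True show ?thesis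
    by (simp add: dot_def basis_elt_def summand flip: sum.inter_filter)
qed (simp add: dot_def basis_elt_def)

lemma is_hom_elt_cons_slice:
  assumes "is_hom_elt dim d (Suc n) F"
  shows "is_hom_elt dim d n (\<lambda>d' u. F d' (j # u))"
proof -
  have F: "is_elt dim F" and hom: "\<And>d' t. F d' t \<noteq> 0 \<Longrightarrow> d' = d \<and> length t = Suc n"
    using assms unfolding is_hom_elt_def by blast+
  have "is_elt dim (\<lambda>d' u. F d' (j # u))"
  proof (rule is_eltI)
    have "{(d', u). F d' (j # u) \<noteq> 0} \<subseteq> (\<lambda>(d', t). (d', tl t)) ` {(d', t). F d' t \<noteq> 0}"
      by force
    then show "finite {(d', u). F d' (j # u) \<noteq> 0}"
      using F by (blast intro: finite_subset is_elt_finite_support)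
    show "set u \<subseteq> {..<dim d'}" if "F d' (j # u) \<noteq> 0" for d' u
      using is_elt_support_bounded[OF F that] by simp
    show "F d' (j # u) = F d' (j # u')" if "mset u = mset u'" for d' u u'
      using that by (intro is_elt_mset_invariant[OF F]) simp
  qed
  with hom show ?thesis
    unfolding is_hom_elt_def by fastforce
qed

lemma is_elt_dot_basis_elt_cons:
  assumes F: "is_elt dim F"
  shows "is_elt dim (dot (basis_elt d j) (\<lambda>d' u. F d' (j # u)))"
  unfolding dot_basis_elt_cons[OF F, abs_def]
proof (rule is_eltI)
  have "{(d', t). (if d' = d then of_nat (count (mset t) j) * F d t else 0) \<noteq> 0}
      \<subseteq> {(d', t). F d' t \<noteq> 0}"
    by auto
  then show "finite {(d', t). (if d' = d then of_nat (count (mset t) j) * F d t else 0) \<noteq> 0}"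
    using F by (blast intro: finite_subset is_elt_finite_support)
  show "set t \<subseteq> {..<dim d'}" if "(if d' = d then of_nat (count (mset t) j) * F d t else 0) \<noteq> 0"
    for d' t
    using that is_elt_support_bounded[OF F] by (auto split: if_splits)
  show "(if d' = d then of_nat (count (mset t) j) * F d t else 0)
      = (if d' = d then of_nat (count (mset t') j) * F d t' else 0)" if "mset t = mset t'" for d' t t'
    using that is_elt_mset_invariant[OF F, of t t' d] by simp
qed

lemma hom_elt_eq_sum_basis_dot:
  fixes F :: "'k::field_char_0 elt"
  assumes "is_hom_elt dim d (Suc n) F"
  shows "F = (\<lambda>d' t. inverse (of_nat (Suc n))
                    * (\<Sum>j<dim d. dot (basis_elt d j) (\<lambda>d' u. F d' (j # u)) d' t))"
proof (intro ext)
  fix d' t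
  have F: "is_elt dim F" and hom: "\<And>d' t. F d' t \<noteq> 0 \<Longrightarrow> d' = d \<and> length t = Suc n"
    using assms unfolding is_hom_elt_def by blast+
  have sums: "(\<Sum>j<dim d. dot (basis_elt d j) (\<lambda>d' u. F d' (j # u)) d' t)
      = (if d' = d then (\<Sum>j<dim d. of_nat (count (mset t) j)) * F d t else 0)"
    by (simp add: dot_basis_elt_cons[OF F] sum_distrib_right)
  show "F d' t = inverse (of_nat (Suc n))
                 * (\<Sum>j<dim d. dot (basis_elt d j) (\<lambda>d' u. F d' (j # u)) d' t)"
  proof (cases "F d' t = 0")
    case False
    then have "d' = d" "length t = Suc n" "set t \<subseteq> {..<dim d}"
      using hom is_elt_support_bounded[OF F] by blast+
    then show ?thesis
      unfolding sums by (simp add: count_mset sum_count_set flip: of_nat_sum del: of_nat_Suc)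
  qed (auto simp: sums)
qed

lemma Delta_eq_deconcat_length_0:
  assumes \<Delta>: "is_Delta dim \<Delta>" and "is_hom_elt dim d 0 F"
  shows "\<Delta> F = deconcat F"
proof -
  have F: "F = (\<lambda>d' t. F d [] * unit_elt d d' t)"
  proof (intro ext)
    fix d' t
    have "F d' t = 0" if "d' \<noteq> d \<or> t \<noteq> []"
      using assms(2) that unfolding is_hom_elt_def by blast
    then show "F d' t = F d [] * unit_elt d d' t"
      by (auto simp: unit_elt_def)
  qed
  have "\<Delta> F = (\<lambda>d1 d2 s t. F d [] * unit2 d d1 d2 s t)"
    by (subst F) (simp add: Delta_scale[OF \<Delta> is_elt_unit_elt] Delta_unit_elt[OF \<Delta>])
  also have "\<dots> = deconcat F"
    by (subst (2) F) (auto simp: deconcat_def unit2_def unit_elt_def fun_eq_iff)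
  finally show ?thesis .
qed

lemma Delta_eq_deconcat:
  fixes \<Delta> :: "'k::field_char_0 elt \<Rightarrow> 'k elt2"
  assumes \<Delta>: "is_Delta dim \<Delta>" and "is_hom_elt dim d n F"
  shows "\<Delta> F = deconcat F"
  using assms(2)
proof (induction n arbitrary: F)
  case 0
  then show ?case by (rule Delta_eq_deconcat_length_0[OF \<Delta>])
next
  case (Suc n)
  define G where "G j = dot (basis_elt d j) (\<lambda>d' u. F d' (j # u))" for j
  have G_elt: "is_elt dim (G j)" for j
    using Suc.prems unfolding G_def is_hom_elt_def by (blast intro: is_elt_dot_basis_elt_cons)
  have \<Delta>G: "\<Delta> (G j) = deconcat (G j)" if "j < dim d" for j
  proof -
    have basis: "is_hom_elt dim d 1 (basis_elt d j)"
      using that by (rule is_hom_elt_basis_elt)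
    have slice: "is_hom_elt dim d n (\<lambda>d' u. F d' (j # u))"
      using Suc.prems by (rule is_hom_elt_cons_slice)
    have "\<Delta> (G j) = dot2 (\<Delta> (basis_elt d j)) (\<Delta> (\<lambda>d' u. F d' (j # u)))"
      using basis slice unfolding G_def is_hom_elt_def by (blast intro: Delta_dot[OF \<Delta>])
    then show ?thesis
      by (simp add: G_def Delta_prim[OF \<Delta> basis] Suc.IH[OF slice] deconcat_dot deconcat_prim[OF basis])
  qed
  have F_eq: "F = (\<lambda>d' t. inverse (of_nat (Suc n)) * (\<Sum>j<dim d. G j d' t))"
    using hom_elt_eq_sum_basis_dot[OF Suc.prems] unfolding G_def .
  have "\<Delta> F = \<Delta> (\<lambda>d' t. inverse (of_nat (Suc n)) * (\<Sum>j<dim d. G j d' t))"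
    by (rule arg_cong[OF F_eq])
  also have "\<dots> = (\<lambda>d1 d2 s t. inverse (of_nat (Suc n)) * (\<Sum>j<dim d. \<Delta> (G j) d1 d2 s t))"
    using G_elt by (simp add: Delta_scale[OF \<Delta> is_elt_sum] Delta_sum[OF \<Delta>])
  also have "\<dots> = deconcat (\<lambda>d' t. inverse (of_nat (Suc n)) * (\<Sum>j<dim d. G j d' t))"
    by (simp add: \<Delta>G deconcat_def fun_eq_iff sum_distrib_left)
  also have "\<dots> = deconcat F"
    by (rule arg_cong[OF F_eq, symmetric])
  finally show ?case .
qed

lemma finite_tuples: "finite (tuples dim d n)"
  using finite_lists_length_eq[of "{..<dim d}" n] unfolding tuples_def by (simp add: conj_commute)

lemma sum_tuples_append:
  "(\<Sum>u\<in>tuples dim k (a + b). g u) = (\<Sum>p\<in>tuples dim k a. \<Sum>q\<in>tuples dim k b. g (p @ q))"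
proof -
  have "bij_betw (\<lambda>(p, q). p @ q) (tuples dim k a \<times> tuples dim k b) (tuples dim k (a + b))"
    by (rule bij_betw_byWitness[where f' = "\<lambda>u. (take a u, drop a u)"])
       (auto simp: tuples_def dest: in_set_takeD in_set_dropD)
  then show ?thesis
    by (simp add: sum.reindex_bij_betw[symmetric] sum.cartesian_product case_prod_beta)
qed

lemma permute_list_inv_cancel:
  assumes "p permutes {..<length s}"
  shows "permute_list (inv p) (permute_list p s) = s"
    and "permute_list p (permute_list (inv p) s) = s"
  using permute_list_compose[of "inv p" s p] permute_list_compose[of p s "inv p"]
    permutes_inv[OF assms] assms by (simp_all add: permutes_inv_o)

lemma sum_tuples_permute_list:
  assumes "p permutes {..<m}"
  shows "(\<Sum>s\<in>tuples dim k m. g (permute_list p s)) = (\<Sum>s\<in>tuples dim k m. g s)"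
proof -
  have "bij_betw (permute_list p) (tuples dim k m) (tuples dim k m)"
    by (rule bij_betw_byWitness[where f' = "permute_list (inv p)"])
       (use assms permutes_inv[OF assms] in \<open>auto simp: tuples_def permute_list_inv_cancel\<close>)
  then show ?thesis
    by (rule sum.reindex_bij_betw)
qed

lemma coefprod_append:
  assumes "length s1 = length s" "length s2 = length s" "length t1 = length t" "length t2 = length t"
  shows "coefprod c d e (s1 @ t1) (s2 @ t2) (s @ t) = coefprod c d e s1 s2 s * coefprod c d e t1 t2 t"
proof -
  have "(\<Prod>j<a + b. h j) = (\<Prod>j<a. h j) * (\<Prod>j<b. h (j + a))" for a b and h :: "nat \<Rightarrow> 'a"
    by (induction b) (simp_all add: ac_simps)
  then show ?thesis
    unfolding coefprod_def by (simp add: nth_append assms)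
qed

lemma coefprod_permute_list:
  assumes p: "p permutes {..<length t}" and "length s = length t" "length s' = length t"
  shows "coefprod c a b (permute_list p s) (permute_list p s') (permute_list p t) = coefprod c a b s s' t"
proof -
  have "coefprod c a b (permute_list p s) (permute_list p s') (permute_list p t)
      = (\<Prod>j<length t. c a b (s ! p j) (s' ! p j) (t ! p j))"
    unfolding coefprod_def using assms by (intro prod.cong) (simp_all add: permute_list_nth)
  also have "\<dots> = coefprod c a b s s' t"
    using prod.permute[OF p, of "\<lambda>j. c a b (s ! j) (s' ! j) (t ! j)"] by (simp add: coefprod_def comp_def)
  finally show ?thesis .
qed

lemma star_mset_invariant:
  assumes x: "is_elt dim x" and v: "is_elt dim v" and "mset t = mset t'"
  shows "star dim c x v D t = star dim c x v D t'"
proof -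
  obtain p where p: "p permutes {..<length t'}" and t: "t = permute_list p t'"
    using mset_eq_permutation[OF assms(3)] by metis
  have "(\<Sum>s\<in>tuples dim d (length t'). \<Sum>s'\<in>tuples dim (D - d) (length t').
          x d s * v (D - d) s' * coefprod c d (D - d) s s' (permute_list p t'))
      = (\<Sum>s\<in>tuples dim d (length t'). \<Sum>s'\<in>tuples dim (D - d) (length t').
          x d s * v (D - d) s' * coefprod c d (D - d) s s' t')" for d
  proof -
    let ?f = "\<lambda>s s'. x d s * v (D - d) s' * coefprod c d (D - d) s s' (permute_list p t')"
    have "(\<Sum>s\<in>tuples dim d (length t'). \<Sum>s'\<in>tuples dim (D - d) (length t'). ?f s s')
        = (\<Sum>s\<in>tuples dim d (length t'). \<Sum>s'\<in>tuples dim (D - d) (length t').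
            ?f s (permute_list p s'))"
      by (rule sum.cong[OF refl]) (rule sum_tuples_permute_list[OF p, symmetric])
    also have "\<dots> = (\<Sum>s\<in>tuples dim d (length t'). \<Sum>s'\<in>tuples dim (D - d) (length t').
            ?f (permute_list p s) (permute_list p s'))"
      by (rule sum_tuples_permute_list[OF p, symmetric])
    also have "\<dots> = (\<Sum>s\<in>tuples dim d (length t'). \<Sum>s'\<in>tuples dim (D - d) (length t').
          x d s * v (D - d) s' * coefprod c d (D - d) s s' t')"
    proof (intro sum.cong refl)
      fix s s' assume "s \<in> tuples dim d (length t')" "s' \<in> tuples dim (D - d) (length t')"
      then show "?f (permute_list p s) (permute_list p s') = x d s * v (D - d) s' * coefprod c d (D - d) s s' t'"
        using p is_elt_mset_invariant[OF x, of "permute_list p s" s d]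
          is_elt_mset_invariant[OF v, of "permute_list p s'" s' "D - d"]
        by (simp add: tuples_def coefprod_permute_list)
    qed
    finally show ?thesis .
  qed
  then show ?thesis
    using p unfolding t star_def by simp
qed

lemma star_support:
  assumes x: "is_hom_elt dim e n x" and v: "is_hom_elt dim d n v"
    and "star dim c x v D t \<noteq> 0"
  shows "D = d + e \<and> length t = n \<and> set t \<subseteq> {..<dim D}"
proof -
  have t: "set t \<subseteq> {..<dim D}"
    using assms(3) by (auto simp: star_def split: if_splits)
  with assms(3) obtain d1 s s' where
    "d1 \<le> D" "s \<in> tuples dim d1 (length t)" "x d1 s * v (D - d1) s' * coefprod c d1 (D - d1) s s' t \<noteq> 0"
    unfolding star_def by (auto elim!: sum.not_neutral_contains_not_neutral)
  then have "d1 \<le> D" "length s = length t" "x d1 s \<noteq> 0" "v (D - d1) s' \<noteq> 0"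
    by (auto simp: tuples_def)
  with x v t show ?thesis
    unfolding is_hom_elt_def by fastforce
qed

lemma is_hom_elt_star:
  assumes x: "is_hom_elt dim e n x" and v: "is_hom_elt dim d n v"
  shows "is_hom_elt dim (d + e) n (star dim c x v)"
proof -
  have "is_elt dim (star dim c x v)"
  proof (rule is_eltI)
    have "{(D, t). star dim c x v D t \<noteq> 0} \<subseteq> {d + e} \<times> tuples dim (d + e) n"
      by (auto simp: tuples_def dest!: star_support[OF x v])
    then show "finite {(D, t). star dim c x v D t \<noteq> 0}"
      by (rule finite_subset) (simp add: finite_tuples)
    show "set t \<subseteq> {..<dim D}" if "star dim c x v D t \<noteq> 0" for D t
      using star_support[OF x v that] by blast
    show "star dim c x v D t = star dim c x v D t'" if "mset t = mset t'" for D t t'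
      using x v that unfolding is_hom_elt_def by (blast intro: star_mset_invariant)
  qed
  with star_support[OF x v, of c] show ?thesis
    unfolding is_hom_elt_def by blast
qed

lemma sum_tuples_coefprod_append:
  "(\<Sum>s1\<in>tuples dim d1 (length s). \<Sum>s2\<in>tuples dim d2 (length s).
      \<Sum>t1\<in>tuples dim d1 (length t). \<Sum>t2\<in>tuples dim d2 (length t).
        x (s1 @ t1) * v (s2 @ t2) * coefprod c d1 d2 s1 s2 s * coefprod c d1 d2 t1 t2 t)
   = (\<Sum>u\<in>tuples dim d1 (length (s @ t)). \<Sum>u'\<in>tuples dim d2 (length (s @ t)).
        x u * v u' * coefprod c d1 d2 u u' (s @ t))"
proof -
  have "(\<Sum>s1\<in>tuples dim d1 (length s). \<Sum>s2\<in>tuples dim d2 (length s).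
      \<Sum>t1\<in>tuples dim d1 (length t). \<Sum>t2\<in>tuples dim d2 (length t).
        x (s1 @ t1) * v (s2 @ t2) * coefprod c d1 d2 s1 s2 s * coefprod c d1 d2 t1 t2 t)
   = (\<Sum>s1\<in>tuples dim d1 (length s). \<Sum>t1\<in>tuples dim d1 (length t).
      \<Sum>s2\<in>tuples dim d2 (length s). \<Sum>t2\<in>tuples dim d2 (length t).
        x (s1 @ t1) * v (s2 @ t2) * coefprod c d1 d2 (s1 @ t1) (s2 @ t2) (s @ t))"
    by (subst sum.swap) (intro sum.cong refl, simp add: coefprod_append tuples_def)
  then show ?thesis
    by (simp add: sum_tuples_append)
qed

lemma star2_deconcat: "star2 dim c (deconcat x) (deconcat v) = deconcat (star dim c x v)"
proof (intro ext)
  fix D D' s t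
  show "star2 dim c (deconcat x) (deconcat v) D D' s t = deconcat (star dim c x v) D D' s t"
  proof (cases "set s \<subseteq> {..<dim D} \<and> set t \<subseteq> {..<dim D'} \<and> D = D'")
    case False
    then show ?thesis
      by (auto simp: star2_def deconcat_def star_def intro!: sum.neutral)
  next
    case True
    then have D': "D' = D" and st: "set s \<subseteq> {..<dim D}" "set t \<subseteq> {..<dim D}"
      by auto
    have "(\<Sum>d1'\<le>D. \<Sum>s1\<in>tuples dim d1 (length s). \<Sum>s2\<in>tuples dim (D - d1) (length s).
           \<Sum>t1\<in>tuples dim d1' (length t). \<Sum>t2\<in>tuples dim (D - d1') (length t).
             deconcat x d1 d1' s1 t1 * deconcat v (D - d1) (D - d1') s2 t2
             * coefprod c d1 (D - d1) s1 s2 s * coefprod c d1' (D - d1') t1 t2 t)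
        = (\<Sum>u\<in>tuples dim d1 (length (s @ t)). \<Sum>u'\<in>tuples dim (D - d1) (length (s @ t)).
             x d1 u * v (D - d1) u' * coefprod c d1 (D - d1) u u' (s @ t))"
      if "d1 \<le> D" for d1
      using that
      by (subst sum.mono_neutral_right[where S = "{d1}"])
         (auto simp: deconcat_def sum_tuples_coefprod_append intro!: sum.neutral)
    then show ?thesis
      using st unfolding D' by (simp add: star2_def star_def deconcat_def)
  qed
qed

theorem lemma3p4:
  fixes dim :: "nat \<Rightarrow> nat"
    and c :: "nat \<Rightarrow> nat \<Rightarrow> nat \<Rightarrow> nat \<Rightarrow> nat \<Rightarrow> 'k::field_char_0"
    and \<Delta> :: "'k elt \<Rightarrow> 'k elt2"
    and x y v :: "'k elt"
    and d e n m :: nat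
  assumes "graded_alg dim c"
    and "is_Delta dim \<Delta>"
    and "is_hom_elt dim e n x"
    and "is_hom_elt dim d m y"
    and "is_hom_elt dim d n v"
  shows "\<Delta> (dot y v) = dot2 (\<Delta> y) (\<Delta> v)
       \<and> \<Delta> (star dim c x v) = star2 dim c (\<Delta> x) (\<Delta> v)"
proof
  show "\<Delta> (dot y v) = dot2 (\<Delta> y) (\<Delta> v)"
    using assms(4,5) unfolding is_hom_elt_def by (blast intro: Delta_dot[OF assms(2)])
  have "\<Delta> (star dim c x v) = deconcat (star dim c x v)"
    using is_hom_elt_star[OF assms(3,5)] by (rule Delta_eq_deconcat[OF assms(2)])
  also have "\<dots> = star2 dim c (deconcat x) (deconcat v)"
    by (rule star2_deconcat[symmetric])
  also have "\<dots> = star2 dim c (\<Delta> x) (\<Delta> v)"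
    using Delta_eq_deconcat[OF assms(2) assms(3)] Delta_eq_deconcat[OF assms(2) assms(5)] by simp
  finally show "\<Delta> (star dim c x v) = star2 dim c (\<Delta> x) (\<Delta> v)" .
qed

end
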